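(* Fix a positive integer $k$ and a real number $\epsilon > 0$. Then all but finitely many numerical semigroups $\Lambda$ with $e(\Lambda) = k$ satisfy $c(\Lambda) > 0$ and \[ \frac{c'(\Lambda)}{c(\Lambda)} > \frac{1}{k} - \epsilon. \]
   Context: A numerical semigroup is a subset $\Lambda \subseteq \mathbb{Z}_{\ge 0}$ that contains $0$, is closed under addition, and has finite complement in $\mathbb{Z}_{\ge 0}$. Every numerical semigroup has a unique minimal (with respect to inclusion) generating set, which is finite; its size is the embedding dimension $e(\Lambda)$. The conductor is $c(\Lambda) = \max(\mathbb{Z}_{\ge 0}\setminus\Lambda) + 1$ (with $c(\Lambda)=0$ if $\Lambda = \mathbb{Z}_{\ge 0}$). Define $c'(\Lambda) = |\{\lambda \in \Lambda : \lambda < c(\Lambda)\}|$. *)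

theory Defs
  imports Main "HOL-Library.Infinite_Set" Complex_Main
begin

definition numerical_semigroup :: "nat set \<Rightarrow> bool" where
  "numerical_semigroup S \<longleftrightarrow> 0 \<in> S \<and> (\<forall>x\<in>S. \<forall>y\<in>S. x + y \<in> S) \<and> finite (UNIV - S)"

inductive_set monoid_gen :: "nat set \<Rightarrow> nat set" for A :: "nat set" where
  zero: "0 \<in> monoid_gen A"
| add: "a \<in> A \<Longrightarrow> x \<in> monoid_gen A \<Longrightarrow> a + x \<in> monoid_gen A"

definition minimal_generating_set :: "nat set \<Rightarrow> nat set" where
  "minimal_generating_set S =
     (THE A. monoid_gen A = S \<and> (\<forall>B. B \<subset> A \<longrightarrow> monoid_gen B \<noteq> S))"

definition embedding_dimension :: "nat set \<Rightarrow> nat" where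
  "embedding_dimension S = card (minimal_generating_set S)"

definition conductor :: "nat set \<Rightarrow> nat" where
  "conductor S = (if UNIV - S = {} then 0 else Max (UNIV - S) + 1)"

definition conductor' :: "nat set \<Rightarrow> nat" where
  "conductor' S = card {x \<in> S. x < conductor S}"

end

theory Submission
  imports Defs "HOL-Library.FuncSet"
begin

(* Let S be a numerical semigroup with conductor c, let k be the number of its atoms (the
   irreducible elements, which form the minimal generating set, so k is the embedding dimension)
   and let n be any atom, with Apery set Ap = {w in S. w - n not in S}.  Two counts give
     (1)  card Ap * c <= n * c' + sum Ap,  since each w in Ap starts an n-progression inside S
          with at least (c - w)/n terms below c, and these progressions are disjoint;
     (2)  k * sum Ap <= (k - 1) * card Ap * (c + n - 1),  since each w in Ap is a combination of
          the other atoms, and shifting Ap along a fixed atom a stays below c + n.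
   With card Ap >= n they yield  c - (k - 1)(n - 1) <= k c',  hence  c'/c >= 1/k - n/c.
   We apply this to the multiplicity m (the least nonzero element, an atom).  Every element of
   [c, c + m) is a sum of atoms with coefficients at most c div m + 2, so m <= (c div m + 3)^k;
   hence m/c is small once c is large.  As only finitely many numerical semigroups have bounded
   conductor, the theorem follows. *)

lemma numerical_semigroup_zero: "numerical_semigroup S \<Longrightarrow> 0 \<in> S"
  by (simp add: numerical_semigroup_def)

lemma numerical_semigroup_add:
  "numerical_semigroup S \<Longrightarrow> x \<in> S \<Longrightarrow> y \<in> S \<Longrightarrow> x + y \<in> S"
  by (simp add: numerical_semigroup_def)

lemma numerical_semigroup_mult: "numerical_semigroup S \<Longrightarrow> x \<in> S \<Longrightarrow> j * x \<in> S"
  by (induction j) (auto simp: numerical_semigroup_zero numerical_semigroup_add)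

lemma in_semigroup_above_conductor:
  assumes "numerical_semigroup S" "conductor S \<le> x"
  shows "x \<in> S"
proof (rule ccontr)
  assume "x \<notin> S"
  moreover have "finite (UNIV - S)" using assms(1) by (simp add: numerical_semigroup_def)
  ultimately have "x \<le> Max (UNIV - S)" "UNIV - S \<noteq> {}" by auto
  then show False using assms(2) unfolding conductor_def by auto
qed

lemma gap_below_conductor: "numerical_semigroup S \<Longrightarrow> x \<notin> S \<Longrightarrow> x < conductor S"
  using in_semigroup_above_conductor not_le by blast

text \<open>A numerical semigroup is determined by its elements below a bound for the conductor,
  so there are only finitely many numerical semigroups of bounded conductor.\<close>
lemma finite_bounded_conductor: "finite {S. numerical_semigroup S \<and> conductor S \<le> C}"
proof (rule finite_subset)
  show "{S. numerical_semigroup S \<and> conductor S \<le> C} \<subseteq> (\<lambda>B. B \<union> {C..}) ` Pow {..<C}"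
  proof
    fix S assume "S \<in> {S. numerical_semigroup S \<and> conductor S \<le> C}"
    then have "S \<inter> {..<C} \<union> {C..} \<subseteq> S"
      using in_semigroup_above_conductor[of S] by auto
    then have "S = (S \<inter> {..<C}) \<union> {C..}" by auto
    then show "S \<in> (\<lambda>B. B \<union> {C..}) ` Pow {..<C}" by blast
  qed
qed simp

lemma monoid_gen_add: "x \<in> monoid_gen A \<Longrightarrow> y \<in> monoid_gen A \<Longrightarrow> x + y \<in> monoid_gen A"
proof (induction x rule: monoid_gen.induct)
  case (add a x)
  then show ?case using monoid_gen.add[of a A "x + y"] by (simp add: add.assoc)
qed simp

lemma monoid_gen_subset: "numerical_semigroup S \<Longrightarrow> A \<subseteq> S \<Longrightarrow> monoid_gen A \<subseteq> S"
proof
  fix x assume ns: "numerical_semigroup S" and AS: "A \<subseteq> S" and x: "x \<in> monoid_gen A"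
  from x show "x \<in> S" using ns AS
    by (induction x rule: monoid_gen.induct)
       (auto simp: numerical_semigroup_zero numerical_semigroup_add)
qed

lemma monoid_gen_linear_combination:
  "x \<in> monoid_gen A \<Longrightarrow> finite A \<Longrightarrow> \<exists>l. x = (\<Sum>a\<in>A. l a * a)"
proof (induction x rule: monoid_gen.induct)
  case zero
  show ?case by (intro exI[of _ "\<lambda>_. 0"]) simp
next
  case (add a x)
  then obtain l where l: "x = (\<Sum>a\<in>A. l a * a)" by auto
  have "(\<Sum>b\<in>A. (l(a := l a + 1)) b * b) = (\<Sum>b\<in>A. l b * b + (if b = a then a else 0))"
    by (rule sum.cong) auto
  also have "\<dots> = a + x" using add.hyps(1) add.prems l by (simp add: sum.distrib)
  finally show ?case by metis
qed

lemma linear_combination_in_semigroup: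
  "finite A \<Longrightarrow> numerical_semigroup S \<Longrightarrow> A \<subseteq> S \<Longrightarrow> (\<Sum>a\<in>A. f a * a) \<in> S"
  by (induction A rule: finite_induct)
     (auto simp: numerical_semigroup_zero numerical_semigroup_add numerical_semigroup_mult)

section \<open>Atoms: the minimal generating set\<close>

definition atoms :: "nat set \<Rightarrow> nat set" where
  "atoms S = {a \<in> S. a \<noteq> 0 \<and> (\<forall>x\<in>S. \<forall>y\<in>S. a = x + y \<longrightarrow> x = 0 \<or> y = 0)}"

lemma monoid_gen_atoms:
  assumes ns: "numerical_semigroup S"
  shows "monoid_gen (atoms S) = S"
proof
  show "monoid_gen (atoms S) \<subseteq> S" using monoid_gen_subset[OF ns] by (auto simp: atoms_def)
next
  show "S \<subseteq> monoid_gen (atoms S)"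
  proof
    fix s assume "s \<in> S"
    then show "s \<in> monoid_gen (atoms S)"
    proof (induction s rule: less_induct)
      case (less s)
      show ?case
      proof (cases "s \<in> atoms S \<or> s = 0")
        case True
        then show ?thesis using monoid_gen.add[of s "atoms S" 0] monoid_gen.zero by auto
      next
        case False
        then obtain x y where "x \<in> S" "y \<in> S" "s = x + y" "x \<noteq> 0" "y \<noteq> 0"
          using less.prems unfolding atoms_def by auto
        then show ?thesis using less.IH monoid_gen_add by auto
      qed
    qed
  qed
qed

lemma atoms_subset_generators:
  assumes ns: "numerical_semigroup S" and gen: "monoid_gen B = S"
  shows "atoms S \<subseteq> B"
proof -
  have "x \<in> monoid_gen B \<Longrightarrow> x \<in> atoms S \<Longrightarrow> x \<in> B" for x
  proof (induction x rule: monoid_gen.induct)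
    case zero
    then show ?case by (simp add: atoms_def)
  next
    case (add b x)
    have "b \<in> S" using monoid_gen.add[OF add.hyps(1) monoid_gen.zero] gen by simp
    moreover have "x \<in> S" using add.hyps(2) gen by simp
    ultimately have "b = 0 \<or> x = 0" using add.prems unfolding atoms_def by blast
    then show ?case using add by auto
  qed
  then show ?thesis using gen ns by (auto simp: atoms_def)
qed

lemma minimal_generating_set_eq_atoms:
  assumes ns: "numerical_semigroup S"
  shows "minimal_generating_set S = atoms S"
  unfolding minimal_generating_set_def
proof (rule the_equality)
  show "monoid_gen (atoms S) = S \<and> (\<forall>B. B \<subset> atoms S \<longrightarrow> monoid_gen B \<noteq> S)"
    using monoid_gen_atoms[OF ns] atoms_subset_generators[OF ns] by blast
next
  fix A assume "monoid_gen A = S \<and> (\<forall>B. B \<subset> A \<longrightarrow> monoid_gen B \<noteq> S)"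
  then show "A = atoms S" using monoid_gen_atoms[OF ns] atoms_subset_generators[OF ns] by blast
qed

corollary embedding_dimension_eq_card_atoms:
  "numerical_semigroup S \<Longrightarrow> embedding_dimension S = card (atoms S)"
  by (simp add: embedding_dimension_def minimal_generating_set_eq_atoms)

lemma progression_terms_finite:
  fixes n w c :: nat
  assumes "0 < n"
  shows "finite {j. w + j * n < c}"
proof (rule finite_subset)
  show "{j. w + j * n < c} \<subseteq> {..<c}"
  proof
    fix j assume "j \<in> {j. w + j * n < c}"
    then have "w + j * n < c" by simp
    moreover have "j \<le> j * n" using assms by simp
    ultimately have "j < c" by linarith
    then show "j \<in> {..<c}" by simp
  qed
qed simp

lemma progression_terms_below:
  fixes n w c :: nat
  assumes n: "0 < n"
  shows "c \<le> n * card {j. w + j * n < c} + w"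
proof (cases "c \<le> w")
  case False
  define d where "d = c - w"
  define q where "q = (d + n - 1) div n"
  have d: "1 \<le> d" "w + d = c" using False unfolding d_def by auto
  have "{..<q} \<subseteq> {j. w + j * n < c}"
  proof
    fix j assume "j \<in> {..<q}"
    then have "Suc j * n \<le> q * n" by (intro mult_le_mono1) simp
    also have "\<dots> \<le> d + n - 1" unfolding q_def by (rule div_times_less_eq_dividend)
    finally show "j \<in> {j. w + j * n < c}" using d n by simp
  qed
  then have "card {..<q} \<le> card {j. w + j * n < c}"
    by (rule card_mono[OF progression_terms_finite[OF n]])
  then have "n * q \<le> n * card {j. w + j * n < c}" by simp
  moreover have "d \<le> n * q"
  proof -
    have "d + n - 1 = q * n + (d + n - 1) mod n" unfolding q_def by simp
    moreover have "(d + n - 1) mod n < n" using n by simp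
    ultimately have "d + n - 1 < q * n + n" by linarith
    then show ?thesis using n d by (simp add: mult.commute)
  qed
  ultimately show ?thesis using d by linarith
qed simp

section \<open>Apery sets\<close>

definition apery :: "nat set \<Rightarrow> nat \<Rightarrow> nat set" where
  "apery S n = {w \<in> S. \<not> (n \<le> w \<and> w - n \<in> S)}"

locale semigroup_element =
  fixes S :: "nat set" and n :: nat
  assumes ns: "numerical_semigroup S" and n_in: "n \<in> S" and n_pos: "0 < n"
begin

abbreviation "c \<equiv> conductor S"
abbreviation "Ap \<equiv> apery S n"

lemma apery_in: "w \<in> Ap \<Longrightarrow> w \<in> S"
  by (simp add: apery_def)

lemma apery_le: "w \<in> Ap \<Longrightarrow> w \<le> c + n - 1"
  using gap_below_conductor[OF ns, of "w - n"] by (cases "n \<le> w") (auto simp: apery_def)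

lemma apery_finite: "finite Ap"
proof (rule finite_subset)
  show "Ap \<subseteq> {..c + n - 1}" using apery_le by auto
qed simp

lemma plus_multiple_in: "w \<in> S \<Longrightarrow> w + j * n \<in> S"
  using numerical_semigroup_add[OF ns] numerical_semigroup_mult[OF ns n_in] by blast

text \<open>The least element of S in each residue class modulo n lies in the Apery set,
  so the Apery set has at least n elements (in fact exactly n).\<close>
lemma card_apery_ge: "n \<le> card Ap"
proof -
  define g where "g r = (LEAST w. w \<in> S \<and> w mod n = r)" for r
  have g_in: "g r \<in> S \<and> g r mod n = r" if "r < n" for r
  proof -
    have "c \<le> c * n" using n_pos by simp
    then have "c \<le> c * n + r" by linarith
    then have "c * n + r \<in> S" by (rule in_semigroup_above_conductor[OF ns])
    moreover have "(c * n + r) mod n = r" using that by simp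
    ultimately have "c * n + r \<in> S \<and> (c * n + r) mod n = r" ..
    then show ?thesis unfolding g_def by (rule LeastI[where P = "\<lambda>w. w \<in> S \<and> w mod n = r"])
  qed
  have g_least: "g r \<le> w" if "w \<in> S \<and> w mod n = r" for r w
    unfolding g_def using that by (rule Least_le[where P = "\<lambda>w. w \<in> S \<and> w mod n = r"])
  have "g r \<in> Ap" if r: "r < n" for r
  proof -
    have "\<not> (n \<le> g r \<and> g r - n \<in> S)"
    proof
      assume h: "n \<le> g r \<and> g r - n \<in> S"
      then have "(g r - n) mod n = g r mod n" using le_mod_geq[of n "g r"] by simp
      then have "g r - n \<in> S \<and> (g r - n) mod n = r" using g_in[OF r] h by simp
      then have "g r \<le> g r - n" by (rule g_least)
      then show False using n_pos h by linarith
    qed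
    then show ?thesis using g_in[OF r] by (simp add: apery_def)
  qed
  then have "g ` {..<n} \<subseteq> Ap" by blast
  then have "card (g ` {..<n}) \<le> card Ap" by (rule card_mono[OF apery_finite])
  moreover have "inj_on g {..<n}"
  proof (rule inj_onI)
    fix r r' assume r: "r \<in> {..<n}" and r': "r' \<in> {..<n}" and eq: "g r = g r'"
    have "r = g r mod n" using g_in r by simp
    also have "\<dots> = g r' mod n" using eq by simp
    also have "\<dots> = r'" using g_in r' by simp
    finally show "r = r'" .
  qed
  ultimately show ?thesis by (simp add: card_image)
qed

lemma apery_subtract:
  assumes "w \<in> Ap" "a \<in> S" "j * a \<le> w" "w - j * a \<in> S"
  shows "w - j * a \<in> Ap"
proof -
  have "\<not> (n \<le> w - j * a \<and> w - j * a - n \<in> S)"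
  proof
    assume h: "n \<le> w - j * a \<and> w - j * a - n \<in> S"
    then have "(w - j * a - n) + j * a \<in> S"
      using numerical_semigroup_add[OF ns] numerical_semigroup_mult[OF ns assms(2)] by auto
    moreover have "(w - j * a - n) + j * a = w - n" using h assms(3) by arith
    ultimately show False using assms(1) h assms(3) by (auto simp: apery_def)
  qed
  then show ?thesis using assms(4) by (simp add: apery_def)
qed

text \<open>If an Apery element w and an element v of S satisfy w + i n = v + j n, then j <= i:
  otherwise w - n would be v plus a multiple of n, hence in S.\<close>
lemma apery_shift_compare:
  assumes "w \<in> Ap" "v \<in> S" "w + i * n = v + j * n"
  shows "j \<le> i"
proof (rule ccontr)
  assume "\<not> j \<le> i"
  then obtain d where "j = Suc (i + d)" using less_imp_Suc_add[of i j] by auto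
  then have "w + i * n = (v + d * n + n) + i * n" using assms(3) by (simp add: algebra_simps)
  then have "w = (v + d * n) + n" by simp
  then show False using assms(1) plus_multiple_in[OF assms(2)] by (simp add: apery_def)
qed

text \<open>Every atom is at most c + n: otherwise a - n \<ge> c lies in S and a = n + (a - n) splits a.
  In particular S has finitely many atoms.\<close>
lemma atom_le:
  assumes a: "a \<in> atoms S"
  shows "a \<le> c + n"
proof (rule ccontr)
  assume "\<not> a \<le> c + n"
  then have "n < a" "c \<le> a - n" by auto
  then have rest: "a - n \<in> S" using in_semigroup_above_conductor[OF ns] by simp
  have atom: "\<forall>x\<in>S. \<forall>y\<in>S. a = x + y \<longrightarrow> x = 0 \<or> y = 0"
    using a by (simp add: atoms_def)
  have "a = n + (a - n) \<longrightarrow> n = 0 \<or> a - n = 0"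
    using bspec[OF bspec[OF atom n_in] rest] .
  moreover have "a = n + (a - n)" using \<open>n < a\<close> by simp
  ultimately have "n = 0 \<or> a - n = 0" by (rule mp)
  then show False using n_pos \<open>n < a\<close> by simp
qed

lemma atoms_finite: "finite (atoms S)"
proof (rule finite_subset)
  show "atoms S \<subseteq> {..c + n}" using atom_le by auto
qed simp


text \<open>First counting inequality: the sets {w + j n < c} for w in Ap are disjoint subsets of
  the elements of S below c, and each has at least (c - w)/n elements.\<close>
lemma apery_count_bound: "card Ap * c \<le> n * conductor' S + (\<Sum>w\<in>Ap. w)"
proof -
  define P where "P w = {j. w + j * n < c}" for w
  define h where "h = (\<lambda>(w, j). w + j * n)"
  have P_finite: "finite (P w)" for w
    unfolding P_def using progression_terms_finite n_pos .
  have "inj_on h (Sigma Ap P)"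
  proof (rule inj_onI, clarsimp)
    fix w j w' j' assume w: "w \<in> Ap" and w': "w' \<in> Ap" and "h (w, j) = h (w', j')"
    then have eq: "w + j * n = w' + j' * n" by (simp add: h_def)
    have "j' \<le> j" using apery_shift_compare[OF w apery_in[OF w'] eq] .
    moreover have "j \<le> j'" using apery_shift_compare[OF w' apery_in[OF w] eq[symmetric]] .
    ultimately show "w = w' \<and> j = j'" using eq by simp
  qed
  moreover have "h ` Sigma Ap P \<subseteq> {x \<in> S. x < c}"
    using plus_multiple_in apery_in by (auto simp: h_def P_def)
  then have "card (h ` Sigma Ap P) \<le> conductor' S"
    unfolding conductor'_def by (rule card_mono[rotated]) simp
  ultimately have "card (Sigma Ap P) \<le> conductor' S" by (simp add: card_image)
  then have sum_P: "(\<Sum>w\<in>Ap. card (P w)) \<le> conductor' S"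
    using apery_finite P_finite by simp
  have "card Ap * c = (\<Sum>w\<in>Ap. c)" by simp
  also have "\<dots> \<le> (\<Sum>w\<in>Ap. n * card (P w) + w)"
    unfolding P_def by (intro sum_mono progression_terms_below n_pos)
  also have "\<dots> = n * (\<Sum>w\<in>Ap. card (P w)) + (\<Sum>w\<in>Ap. w)"
    by (simp add: sum.distrib sum_distrib_left)
  also have "\<dots> \<le> n * conductor' S + (\<Sum>w\<in>Ap. w)" using sum_P by simp
  finally show ?thesis .
qed

definition down_steps :: "nat \<Rightarrow> nat \<Rightarrow> nat set" where
  "down_steps a w = {j. 1 \<le> j \<and> j * a \<le> w \<and> w - j * a \<in> S}"

definition up_steps :: "nat \<Rightarrow> nat \<Rightarrow> nat set" where
  "up_steps a w = {j. 1 \<le> j \<and> w + j * a \<in> Ap}"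

lemma down_steps_finite:
  assumes "0 < a"
  shows "finite (down_steps a w)"
proof (rule finite_subset)
  show "down_steps a w \<subseteq> {..w}"
  proof
    fix j assume "j \<in> down_steps a w"
    then have "j * a \<le> w" by (simp add: down_steps_def)
    moreover have "j \<le> j * a" using assms by simp
    ultimately have "j \<le> w" by linarith
    then show "j \<in> {..w}" by simp
  qed
qed simp

lemma up_steps_subset:
  assumes "0 < a"
  shows "up_steps a w \<subseteq> {1..(c + n - 1 - w) div a}"
proof
  fix j assume "j \<in> up_steps a w"
  then have "1 \<le> j" "w + j * a \<le> c + n - 1" using apery_le by (auto simp: up_steps_def)
  then show "j \<in> {1..(c + n - 1 - w) div a}"
    using assms by (simp add: less_eq_div_iff_mult_less_eq)
qed

text \<open>Since Ap is closed under lowering by multiples of a within S, the map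
  (w, j) \<mapsto> (w - j a, j) is a bijection between the two kinds of steps; hence the step
  counts agree on average over Ap.\<close>
lemma sum_down_steps_eq_sum_up_steps:
  assumes a: "a \<in> S" "0 < a"
  shows "(\<Sum>w\<in>Ap. card (down_steps a w)) = (\<Sum>w\<in>Ap. card (up_steps a w))"
proof -
  have "bij_betw (\<lambda>(w, j). (w - j * a, j)) (Sigma Ap (down_steps a)) (Sigma Ap (up_steps a))"
  proof (rule bij_betw_byWitness[where f' = "\<lambda>(w, j). (w + j * a, j)"])
    show "(\<lambda>(w, j). (w - j * a, j)) ` Sigma Ap (down_steps a) \<subseteq> Sigma Ap (up_steps a)"
      using apery_subtract[OF _ a(1)] by (auto simp: down_steps_def up_steps_def)
    show "(\<lambda>(w, j). (w + j * a, j)) ` Sigma Ap (up_steps a) \<subseteq> Sigma Ap (down_steps a)"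
      using apery_in by (auto simp: down_steps_def up_steps_def)
  qed (auto simp: down_steps_def up_steps_def)
  then have "card (Sigma Ap (down_steps a)) = card (Sigma Ap (up_steps a))"
    by (rule bij_betw_same_card)
  moreover have "finite (up_steps a w)" for w
    using up_steps_subset[OF a(2)] finite_subset by blast
  ultimately show ?thesis using apery_finite down_steps_finite[OF a(2)] by simp
qed

lemma up_steps_bound:
  assumes "0 < a" "w \<in> Ap"
  shows "w + card (up_steps a w) * a \<le> c + n - 1"
proof -
  have "card (up_steps a w) \<le> card {1..(c + n - 1 - w) div a}"
    by (rule card_mono[OF finite_atLeastAtMost up_steps_subset[OF assms(1)]])
  then have "card (up_steps a w) \<le> (c + n - 1 - w) div a" by simp
  then have "card (up_steps a w) * a \<le> (c + n - 1 - w) div a * a"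
    by (rule mult_le_mono1)
  also have "\<dots> \<le> c + n - 1 - w"
    by (rule div_times_less_eq_dividend)
  finally have "card (up_steps a w) * a \<le> c + n - 1 - w" .
  then show ?thesis using apery_le[OF assms(2)] by linarith
qed

text \<open>Per-atom estimate: trading the down-steps of a for its up-steps and using that raised
  Apery elements stay below c + n.\<close>
lemma apery_shift_sum_bound:
  assumes "a \<in> S" "0 < a"
  shows "(\<Sum>w\<in>Ap. w + card (down_steps a w) * a) \<le> card Ap * (c + n - 1)"
proof -
  have "(\<Sum>w\<in>Ap. w + card (down_steps a w) * a)
      = (\<Sum>w\<in>Ap. w) + (\<Sum>w\<in>Ap. card (down_steps a w)) * a"
    by (simp add: sum.distrib sum_distrib_right)
  also have "\<dots> = (\<Sum>w\<in>Ap. w + card (up_steps a w) * a)"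
    using sum_down_steps_eq_sum_up_steps[OF assms] by (simp add: sum.distrib sum_distrib_right)
  also have "\<dots> \<le> (\<Sum>w\<in>Ap. c + n - 1)" by (intro sum_mono up_steps_bound assms(2))
  finally show ?thesis by simp
qed

text \<open>If n is an atom, each Apery element w is a combination of the other atoms, and an atom
  a used l times in it can be removed up to l times within S; thus w is bounded by the
  down-step counts of the other atoms.\<close>
lemma apery_le_down_steps:
  assumes n_atom: "n \<in> atoms S" and w: "w \<in> Ap"
  shows "w \<le> (\<Sum>a\<in>atoms S - {n}. card (down_steps a w) * a)"
proof -
  let ?A = "atoms S"
  have AS: "?A \<subseteq> S" and A_pos: "\<And>a. a \<in> ?A \<Longrightarrow> 0 < a" by (auto simp: atoms_def)
  have "w \<in> monoid_gen ?A" using apery_in[OF w] monoid_gen_atoms[OF ns] by simp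
  then obtain l where l: "w = (\<Sum>a\<in>?A. l a * a)"
    using monoid_gen_linear_combination atoms_finite by blast
  have rest_in: "(\<Sum>b\<in>B. l b * b) \<in> S" if "B \<subseteq> ?A" for B
    using that AS atoms_finite
    by (intro linear_combination_in_semigroup[OF _ ns]) (auto intro: finite_subset)
  have split_n: "w = l n * n + (\<Sum>a\<in>?A - {n}. l a * a)"
    using l sum.remove[OF atoms_finite n_atom] by simp
  have "l n = 0"
  proof (rule ccontr)
    assume "l n \<noteq> 0"
    then have "w = n + ((l n - 1) * n + (\<Sum>a\<in>?A - {n}. l a * a))"
      using split_n by (cases "l n") auto
    moreover have "(l n - 1) * n + (\<Sum>a\<in>?A - {n}. l a * a) \<in> S"
      using numerical_semigroup_add[OF ns numerical_semigroup_mult[OF ns n_in] rest_in] by blast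
    ultimately show False using w by (simp add: apery_def)
  qed
  then have w_eq: "w = (\<Sum>a\<in>?A - {n}. l a * a)" using split_n by simp
  have "l a \<le> card (down_steps a w)" if a: "a \<in> ?A - {n}" for a
  proof -
    have split_a: "w = l a * a + (\<Sum>b\<in>?A - {n} - {a}. l b * b)"
      using w_eq sum.remove[of "?A - {n}" a] atoms_finite a by simp
    have "{1..l a} \<subseteq> down_steps a w"
    proof
      fix j assume j: "j \<in> {1..l a}"
      then have "j * a \<le> l a * a" by simp
      then have "j * a \<le> w" using split_a by linarith
      moreover have "w - j * a = (l a - j) * a + (\<Sum>b\<in>?A - {n} - {a}. l b * b)"
        using split_a j by (simp add: diff_mult_distrib)
      moreover have "(l a - j) * a + (\<Sum>b\<in>?A - {n} - {a}. l b * b) \<in> S"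
        using a AS by (intro numerical_semigroup_add[OF ns] numerical_semigroup_mult[OF ns] rest_in) auto
      ultimately show "j \<in> down_steps a w" using j by (simp add: down_steps_def)
    qed
    then have "card {1..l a} \<le> card (down_steps a w)"
      using a by (intro card_mono down_steps_finite A_pos) auto
    then show ?thesis by simp
  qed
  then have "(\<Sum>a\<in>?A - {n}. l a * a) \<le> (\<Sum>a\<in>?A - {n}. card (down_steps a w) * a)"
    by (intro sum_mono) simp
  then show ?thesis using w_eq by linarith
qed

text \<open>Second counting inequality: summing the previous bound over the atoms other than n
  and using the per-atom estimate on Ap.\<close>
lemma sum_apery_bound:
  assumes n_atom: "n \<in> atoms S"
  shows "card (atoms S) * (\<Sum>w\<in>Ap. w) \<le> (card (atoms S) - 1) * (card Ap * (c + n - 1))"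
proof -
  let ?B = "atoms S - {n}"
  have card_B: "card (atoms S) = card ?B + 1"
    using card.remove[OF atoms_finite n_atom] by simp
  have "card (atoms S) * (\<Sum>w\<in>Ap. w) = card ?B * (\<Sum>w\<in>Ap. w) + (\<Sum>w\<in>Ap. w)"
    using card_B by simp
  also have "\<dots> \<le> card ?B * (\<Sum>w\<in>Ap. w) + (\<Sum>w\<in>Ap. \<Sum>a\<in>?B. card (down_steps a w) * a)"
    using apery_le_down_steps[OF n_atom] by (intro add_left_mono sum_mono)
  also have "(\<Sum>w\<in>Ap. \<Sum>a\<in>?B. card (down_steps a w) * a)
           = (\<Sum>a\<in>?B. \<Sum>w\<in>Ap. card (down_steps a w) * a)"
    by (rule sum.swap)
  also have "card ?B * (\<Sum>w\<in>Ap. w) + \<dots> = (\<Sum>a\<in>?B. \<Sum>w\<in>Ap. w + card (down_steps a w) * a)"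
    by (simp add: sum.distrib)
  also have "\<dots> \<le> (\<Sum>a\<in>?B. card Ap * (c + n - 1))"
    by (intro sum_mono apery_shift_sum_bound) (auto simp: atoms_def)
  also have "\<dots> = (card (atoms S) - 1) * (card Ap * (c + n - 1))"
    using card_B by simp
  finally show ?thesis .
qed

text \<open>Combining both counting inequalities with card Ap \<ge> n:
  c - (k - 1)(n - 1) \<le> k c'(S) for every atom n, where k is the embedding dimension.\<close>
lemma conductor_bound_by_conductor':
  assumes n_atom: "n \<in> atoms S"
  defines "k \<equiv> real (card (atoms S))"
  shows "real c - (k - 1) * (real n - 1) \<le> k * real (conductor' S)"
proof -
  define P where "P = real (card Ap)"
  define s where "s = real (\<Sum>w\<in>Ap. w)"
  define X where "X = real c - (k - 1) * (real n - 1)"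
  have k_pos: "card (atoms S) > 0" using atoms_finite n_atom card_gt_0_iff by blast
  have k1: "k \<ge> 1" using k_pos unfolding k_def by simp
  have count1: "P * real c \<le> real n * real (conductor' S) + s"
    using apery_count_bound unfolding P_def s_def by (simp only: of_nat_le_iff flip: of_nat_mult of_nat_add)
  have count2: "k * s \<le> (k - 1) * (P * (real c + real n - 1))"
  proof -
    have "real (card (atoms S) * (\<Sum>w\<in>Ap. w)) \<le> real ((card (atoms S) - 1) * (card Ap * (c + n - 1)))"
      using sum_apery_bound[OF n_atom] by (simp only: of_nat_le_iff)
    then show ?thesis using k_pos n_pos unfolding k_def s_def P_def by (simp add: of_nat_diff)
  qed
  have P_ge: "real n \<le> P" using card_apery_ge unfolding P_def by simp
  have "P * X = k * (P * real c) - (k - 1) * (P * (real c + real n - 1))"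
    unfolding X_def by (simp add: algebra_simps)
  also have "\<dots> \<le> k * (P * real c) - k * s" using count2 by linarith
  also have "\<dots> \<le> k * (real n * real (conductor' S))"
    using count1 k1 by (simp add: right_diff_distrib[symmetric] mult_left_mono)
  finally have PX: "P * X \<le> real n * (k * real (conductor' S))" by (simp add: algebra_simps)
  show ?thesis
  proof (rule ccontr)
    assume "\<not> ?thesis"
    then have "k * real (conductor' S) < X" unfolding X_def by simp
    moreover have "0 \<le> k * real (conductor' S)" using k1 by simp
    ultimately have "real n * (k * real (conductor' S)) < real n * X" "real n * X \<le> P * X"
      using n_pos P_ge by (auto intro: mult_right_mono)
    then show False using PX by linarith
  qed
qed

end

section \<open>The multiplicity\<close>

definition multiplicity :: "nat set \<Rightarrow> nat" where
  "multiplicity S = (LEAST x. x \<in> S \<and> x \<noteq> 0)"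

lemma multiplicity:
  assumes ns: "numerical_semigroup S"
  shows "multiplicity S \<in> S" "0 < multiplicity S"
    and "\<And>x. x \<in> S \<Longrightarrow> x \<noteq> 0 \<Longrightarrow> multiplicity S \<le> x"
proof -
  have "conductor S + 1 \<in> S \<and> conductor S + 1 \<noteq> 0"
    using in_semigroup_above_conductor[OF ns] by simp
  then have "multiplicity S \<in> S \<and> multiplicity S \<noteq> 0"
    unfolding multiplicity_def by (rule LeastI[where P = "\<lambda>x. x \<in> S \<and> x \<noteq> 0"])
  then show "multiplicity S \<in> S" "0 < multiplicity S" by auto
  show "\<And>x. x \<in> S \<Longrightarrow> x \<noteq> 0 \<Longrightarrow> multiplicity S \<le> x"
    unfolding multiplicity_def by (rule Least_le) simp
qed

lemma multiplicity_atom: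
  assumes ns: "numerical_semigroup S"
  shows "multiplicity S \<in> atoms S"
proof -
  have "x = 0 \<or> y = 0" if "x \<in> S" "y \<in> S" "multiplicity S = x + y" for x y
  proof (rule ccontr)
    assume nonzero: "\<not> (x = 0 \<or> y = 0)"
    have "multiplicity S \<le> x" using nonzero by (intro multiplicity(3)[OF ns that(1)]) simp
    moreover have "multiplicity S \<le> y" using nonzero by (intro multiplicity(3)[OF ns that(2)]) simp
    ultimately show False using that(3) multiplicity(2)[OF ns] by linarith
  qed
  then show ?thesis using multiplicity[OF ns] by (auto simp: atoms_def)
qed

text \<open>The m elements of [c, c + m) are sums of the k atoms in which, as every atom is at least m,
  each atom occurs at most c div m + 2 times; counting coefficient vectors bounds m.\<close>
lemma multiplicity_bound:
  assumes ns: "numerical_semigroup S"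
  defines "m \<equiv> multiplicity S" and "c \<equiv> conductor S"
  shows "m \<le> (c div m + 3) ^ card (atoms S)"
proof -
  interpret semigroup_element S m
    using ns multiplicity[OF ns] unfolding m_def by unfold_locales auto
  let ?A = "atoms S" and ?R = "c div m + 2"
  have m_pos: "0 < m" and m_least: "\<And>a. a \<in> ?A \<Longrightarrow> m \<le> a"
    using multiplicity[OF ns] unfolding m_def atoms_def by auto
  have cm: "c + m \<le> ?R * m"
  proof -
    have "c = c div m * m + c mod m" by simp
    moreover have "c mod m < m" using m_pos by simp
    moreover have "?R * m = c div m * m + 2 * m" by (simp add: algebra_simps)
    ultimately show ?thesis by linarith
  qed
  define F where "F l = (\<Sum>a\<in>?A. l a * a)" for l
  have "{c..<c + m} \<subseteq> F ` (PiE ?A (\<lambda>_. {0..?R}))"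
  proof
    fix x assume x: "x \<in> {c..<c + m}"
    then have "x \<in> monoid_gen ?A"
      using in_semigroup_above_conductor[OF ns] monoid_gen_atoms[OF ns] unfolding c_def by simp
    then obtain l where l: "x = F l"
      using monoid_gen_linear_combination atoms_finite unfolding F_def by blast
    have "l a \<le> ?R" if a: "a \<in> ?A" for a
    proof -
      have "l a * m \<le> l a * a" using m_least[OF a] by simp
      also have "\<dots> \<le> x" using l member_le_sum[OF a, of "\<lambda>a. l a * a"] atoms_finite
        unfolding F_def by simp
      also have "\<dots> < ?R * m" using x cm by simp
      finally have "l a < ?R" unfolding mult_less_cancel2 by blast
      then show ?thesis by simp
    qed
    then have "restrict l ?A \<in> PiE ?A (\<lambda>_. {0..?R})" by auto
    moreover have "F (restrict l ?A) = x" using l unfolding F_def by simp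
    ultimately show "x \<in> F ` (PiE ?A (\<lambda>_. {0..?R}))" by blast
  qed
  then have "card {c..<c + m} \<le> card (F ` (PiE ?A (\<lambda>_. {0..?R})))"
    by (intro card_mono finite_imageI finite_PiE atoms_finite) auto
  also have "\<dots> \<le> card (PiE ?A (\<lambda>_. {0..?R}))"
    by (rule card_image_le) (auto intro: finite_PiE atoms_finite)
  also have "\<dots> = (?R + 1) ^ card ?A" using card_PiE[OF atoms_finite, of "\<lambda>_. {0..?R}"] by simp
  finally show ?thesis by (simp add: numeral_3_eq_3)
qed

lemma ratio_lower_bound:
  assumes ns: "numerical_semigroup S" and n_atom: "n \<in> atoms S" and c_pos: "0 < conductor S"
  defines "k \<equiv> real (card (atoms S))" and "c \<equiv> real (conductor S)"
  shows "1 / k - real n / c \<le> real (conductor' S) / c"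
proof -
  interpret semigroup_element S n
    using n_atom ns by unfold_locales (auto simp: atoms_def)
  have "0 < card (atoms S)" using atoms_finite n_atom card_gt_0_iff by blast
  then have k1: "1 \<le> k" unfolding k_def by simp
  have "(k - 1) * (real n - 1) \<le> k * real n" using k1 n_pos by (intro mult_mono) auto
  then have "c - k * real n \<le> k * real (conductor' S)"
    using conductor_bound_by_conductor'[OF n_atom] unfolding k_def c_def by linarith
  moreover have c0: "0 < c" using c_pos unfolding c_def by simp
  ultimately have "(c - k * real n) / (k * c) \<le> (k * real (conductor' S)) / (k * c)"
    using k1 by (intro divide_right_mono) auto
  moreover have "1 / k - real n / c = (c - k * real n) / (k * c)"
    using k1 c0 by (simp add: field_simps)
  ultimately show ?thesis using k1 by simp
qed

lemma conductor_large_wrt_multiplicity: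
  assumes ns: "numerical_semigroup S"
    and big: "M * (M + 3) ^ card (atoms S) < conductor S"
  shows "M * multiplicity S \<le> conductor S"
proof -
  let ?m = "multiplicity S" and ?c = "conductor S"
  have m_pos: "0 < ?m" using multiplicity[OF ns] by simp
  have "M \<le> ?c div ?m"
  proof (rule ccontr)
    assume "\<not> M \<le> ?c div ?m"
    then have small: "?c div ?m + 1 \<le> M" by simp
    then have "(?c div ?m + 3) ^ card (atoms S) \<le> (M + 3) ^ card (atoms S)"
      by (intro power_mono) auto
    then have "?m \<le> (M + 3) ^ card (atoms S)" using multiplicity_bound[OF ns] by simp
    have "?c = ?c div ?m * ?m + ?c mod ?m" by simp
    moreover have "?c mod ?m < ?m" using m_pos by simp
    moreover have "(?c div ?m + 1) * ?m = ?c div ?m * ?m + ?m" by simp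
    ultimately have "?c < (?c div ?m + 1) * ?m" by linarith
    also have "\<dots> \<le> M * ?m" using small by (rule mult_le_mono1)
    also have "\<dots> \<le> M * (M + 3) ^ card (atoms S)" using \<open>?m \<le> _\<close> by simp
    finally show False using big by simp
  qed
  then have "M * ?m \<le> ?c div ?m * ?m" by (rule mult_le_mono1)
  also have "\<dots> \<le> ?c" by (rule div_times_less_eq_dividend)
  finally show ?thesis .
qed

lemma ratio_large_conductor:
  assumes ns: "numerical_semigroup S" and M: "0 < M"
    and big: "M * (M + 3) ^ card (atoms S) < conductor S"
  shows "0 < conductor S \<and>
         1 / real (card (atoms S)) - 1 / real M \<le> real (conductor' S) / real (conductor S)"
proof -
  let ?m = "multiplicity S" and ?c = "conductor S"
  have c_pos: "0 < ?c" using big by simp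
  have "real M * real ?m \<le> real ?c"
    using conductor_large_wrt_multiplicity[OF ns big] by (simp flip: of_nat_mult)
  then have "real ?m / real ?c \<le> 1 / real M" using M c_pos by (simp add: field_simps)
  moreover have "1 / real (card (atoms S)) - real ?m / real ?c \<le> real (conductor' S) / real ?c"
    by (rule ratio_lower_bound[OF ns multiplicity_atom[OF ns] c_pos])
  ultimately show ?thesis using c_pos by linarith
qed

theorem theorem2:
  fixes k :: nat and \<epsilon> :: real
  assumes "k > 0" and "\<epsilon> > 0"
  shows "finite {S. numerical_semigroup S \<and> embedding_dimension S = k \<and>
           \<not> (conductor S > 0 \<and>
               real (conductor' S) / real (conductor S) > 1 / real k - \<epsilon>)}"
proof -
  obtain M :: nat where M: "1 / \<epsilon> < real M" using reals_Archimedean2 by blast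
  moreover have "0 < 1 / \<epsilon>" using \<open>\<epsilon> > 0\<close> by simp
  ultimately have "0 < real M" by linarith
  then have M_pos: "0 < M" by simp
  have M_eps: "1 / real M < \<epsilon>" using M \<open>\<epsilon> > 0\<close> M_pos by (simp add: field_simps)
  let ?C = "M * (M + 3) ^ k"
  have "conductor S \<le> ?C"
    if ns: "numerical_semigroup S" and dim: "embedding_dimension S = k"
      and bad: "\<not> (conductor S > 0 \<and> real (conductor' S) / real (conductor S) > 1 / real k - \<epsilon>)"
    for S
  proof (rule ccontr)
    have k: "card (atoms S) = k" using dim embedding_dimension_eq_card_atoms[OF ns] by simp
    assume "\<not> conductor S \<le> ?C"
    then have "M * (M + 3) ^ card (atoms S) < conductor S" using k by simp
    from ratio_large_conductor[OF ns M_pos this] show False using bad k M_eps by auto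
  qed
  then show ?thesis
    by (intro finite_subset[OF _ finite_bounded_conductor[of ?C]]) auto
qed

end
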